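(* Let $d\geq 2$ be even, and let $Q$ be a real hyperbolic polynomial of degree $d$ with positive leading coefficient and nonzero constant term which defines the moduli order admitting equalities $r_{PN}^0$ or $r_{NP}^0$. Then exactly one of the following holds: (i) $Q$ is even, i.e. $Q=A\prod_{j=1}^{d/2}(x^2-a_j^2)$ with $A>0$ and $a_j\in\mathbb{R}\setminus\{0\}$ not necessarily distinct. In this case the coefficients of $Q$ have signs $(+,0,-,0,+,0,-,0,\dots)$, read from the leading coefficient down to the constant term. (ii) All coefficients of $Q$ are nonzero, and the multiset of roots of $Q$ cannot be partitioned into $d/2$ pairs of the form $\{a_j,-a_j\}$. In this case $Q$ defines the sign pattern $\Sigma_+$ if it defines $r_{PN}^0$, and the sign pattern $\Sigma_-$ if it defines $r_{NP}^0$.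
   Context: A hyperbolic polynomial (HP) is a real univariate polynomial all of whose roots are real. A moduli order admitting equalities (MOAE) of length $d$ is a string of $d$ letters $P$/$N$ separated by $\leq$. A HP $Q$ of degree $d$ with nonzero constant term defines such a string if its $d$ roots, counted with multiplicity, can be listed as $z_1,\dots,z_d$ with $|z_1|\leq\dots\leq|z_d|$, where $z_i>0$ when the $i$-th letter is $P$ and $z_i<0$ when it is $N$. $r_{PN}^0$ is the alternating string $P\leq N\leq P\leq\dots\leq N$ (even length). $r_{NP}^0$ is $N\leq P\leq N\leq\dots\leq P$ (even length). The sign pattern of a polynomial $a_dx^d+\dots+a_0$ with all $a_j\neq0$ is $(\mathrm{sgn}(a_d),\dots,\mathrm{sgn}(a_0))$. $\Sigma_+=(+,+,-,-,+,+,\dots)$ has entry $+$ in position $k$ ($k=0,\dots,d$, the sign of the coefficient of $x^{d-k}$) iff $k\equiv0,1\pmod4$. $\Sigma_-=(+,-,-,+,+,-,-,+,\dots)$ has entry $+$ in position $k$ iff $k\equiv0,3\pmod4$. *)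

theory Defs
  imports "HOL-Computational_Algebra.Polynomial" "HOL-Library.Multiset"
begin

definition root_list :: "real poly \<Rightarrow> real list \<Rightarrow> bool" where
  "root_list Q zs \<longleftrightarrow> length zs = degree Q \<and>
     Q = smult (lead_coeff Q) (\<Prod>z\<leftarrow>zs. [:-z, 1:])"

definition hyperbolic :: "real poly \<Rightarrow> bool" where
  "hyperbolic Q \<longleftrightarrow> (\<exists>zs. root_list Q zs)"

text \<open>A moduli order admitting equalities of length d is encoded as a bool list:
  True = letter P, False = letter N.\<close>
definition defines_moae :: "real poly \<Rightarrow> bool list \<Rightarrow> bool" where
  "defines_moae Q w \<longleftrightarrow> degree Q = length w \<and> coeff Q 0 \<noteq> 0 \<and>
     (\<exists>zs. root_list Q zs \<and> sorted (map abs zs) \<and>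
        (\<forall>i<length w. (w ! i \<longrightarrow> zs ! i > 0) \<and> (\<not> w ! i \<longrightarrow> zs ! i < 0)))"

definition r_PN0 :: "nat \<Rightarrow> bool list" where
  "r_PN0 d = map (\<lambda>i. even i) [0..<d]"

definition r_NP0 :: "nat \<Rightarrow> bool list" where
  "r_NP0 d = map (\<lambda>i. odd i) [0..<d]"

text \<open>Sign patterns as lists of +1/-1 of length d+1; position k is the sign of the
  coefficient of x^(d-k).\<close>
definition Sigma_plus :: "nat \<Rightarrow> real list" where
  "Sigma_plus d = map (\<lambda>k. if k mod 4 = 0 \<or> k mod 4 = 1 then 1 else -1) [0..<Suc d]"

definition Sigma_minus :: "nat \<Rightarrow> real list" where
  "Sigma_minus d = map (\<lambda>k. if k mod 4 = 0 \<or> k mod 4 = 3 then 1 else -1) [0..<Suc d]"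

definition defines_sign_pattern :: "real poly \<Rightarrow> real list \<Rightarrow> bool" where
  "defines_sign_pattern Q \<sigma> \<longleftrightarrow>
     (\<forall>k\<le>degree Q. coeff Q (degree Q - k) \<noteq> 0) \<and>
     map (\<lambda>k. sgn (coeff Q (degree Q - k))) [0..<Suc (degree Q)] = \<sigma>"

definition pairable :: "real multiset \<Rightarrow> bool" where
  "pairable M \<longleftrightarrow> (\<exists>as. M = mset as + mset (map uminus as))"

end

theory Submission
  imports Defs
begin

text \<open>Order the roots by modulus as \<open>e a\<^sub>1, -e b\<^sub>1, e a\<^sub>2, -e b\<^sub>2, \<dots>\<close> with
  \<open>0 < a\<^sub>1 \<le> b\<^sub>1 \<le> a\<^sub>2 \<le> \<dots>\<close>, where \<open>e = 1\<close> for \<open>r_PN0\<close> and \<open>e = -1\<close> for \<open>r_NP0\<close>.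
  Then \<open>Q = L \<Prod>\<^sub>j (x\<^sup>2 + e (b\<^sub>j - a\<^sub>j) x - a\<^sub>j b\<^sub>j)\<close>, and the coefficients of \<open>Q\<close> read from the
  top are those of the reflected product \<open>G = \<Prod>\<^sub>j (1 + e (b\<^sub>j - a\<^sub>j) x - a\<^sub>j b\<^sub>j x\<^sup>2)\<close> read from
  the bottom. Writing \<open>u\<^sub>k = \<sigma>\<^sub>k c\<^sub>k\<close> for the coefficients \<open>c\<^sub>k\<close> of \<open>G\<close> twisted by the
  entries \<open>\<sigma>\<^sub>k\<close> of \<open>\<Sigma>\<^sub>\<plusminus>\<close>, induction over the factors shows \<open>u\<^sub>k \<ge> 0\<close>, \<open>u\<^sub>k > 0\<close> for even
  \<open>k\<close>, and \<open>u\<^sub>k\<^sub>+\<^sub>1 \<le> b u\<^sub>k\<close> for even \<open>k\<close>, with \<open>b\<close> the last \<open>b\<^sub>j\<close>: the interlacing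
  \<open>b\<^sub>j \<le> a\<^sub>j\<^sub>+\<^sub>1\<close> is exactly what prevents cancellation in the even coefficients. If some
  \<open>a\<^sub>j < b\<^sub>j\<close> the odd \<open>u\<^sub>k\<close> are positive too, so \<open>Q\<close> has the sign pattern \<open>\<Sigma>\<^sub>\<plusminus>\<close>;
  otherwise \<open>Q = L \<Prod>\<^sub>j (x\<^sup>2 - a\<^sub>j\<^sup>2)\<close> is even. Roots that pair up as \<open>\<plusminus>a\<close> force this
  even form, whose coefficient of \<open>x\<close> vanishes, so the two cases exclude each other.\<close>

lemma coeff_prod_even_quadratics_odd:
  fixes f g :: "'b \<Rightarrow> 'a::comm_semiring_1"
  assumes "odd k"
  shows "coeff (\<Prod>x\<in>A. [:f x, 0, g x:]) k = 0"
  using assms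
proof (induction A arbitrary: k rule: infinite_finite_induct)
  case (insert x A)
  then show ?case
    by (cases k) (auto simp: coeff_pCons split: nat.split)
qed (auto simp: coeff_1 elim: oddE)

lemma prod_list_map_conv_lessThan:
  "(\<Prod>x\<leftarrow>xs. f x) = (\<Prod>j<length xs. f (xs ! j))"
  using prod.list_conv_set_nth[of "map f xs"] by (simp add: atLeast0LessThan)

lemma prod_lessThan_double:
  fixes f :: "nat \<Rightarrow> 'a::comm_monoid_mult"
  shows "(\<Prod>i<2 * n. f i) = (\<Prod>j<n. f (2 * j) * f (2 * j + 1))"
  by (induction n) (simp_all add: mult.assoc)

lemma eq_sgn_mult_abs:
  fixes e z :: real
  assumes "\<bar>e\<bar> = 1" "0 < e * z"
  shows "z = e * \<bar>z\<bar>"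
proof -
  have "e * e = 1" using assms(1) by (metis abs_mult_self_eq mult_1)
  moreover have "\<bar>z\<bar> = e * z" using assms by (metis abs_mult abs_of_pos mult_1)
  ultimately show ?thesis by (metis mult.assoc mult_1)
qed

lemma nat_cases_0_1_SS [case_names 0 1 SS]:
  "(n = 0 \<Longrightarrow> P) \<Longrightarrow> (n = 1 \<Longrightarrow> P) \<Longrightarrow> (\<And>i. n = Suc (Suc i) \<Longrightarrow> P) \<Longrightarrow> P"
  by (metis One_nat_def not0_implies_Suc)

lemma degree_mult_quadratic:
  fixes G :: "'a::idom poly"
  assumes "G \<noteq> 0" "c \<noteq> 0"
  shows "degree (G * [:x, y, c:]) = degree G + 2"
  using assms by (subst degree_mult_eq) auto

lemma degree_prod_quadratics:
  fixes y c :: "nat \<Rightarrow> 'a::idom"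
  assumes "\<forall>j<m. c j \<noteq> 0"
  shows "degree (\<Prod>j<m. [:1, y j, c j:]) = 2 * m"
  using assms by (subst degree_prod_sum_eq) auto

lemma degree_prod_monic_quadratics:
  fixes y c :: "nat \<Rightarrow> 'a::idom"
  shows "degree (\<Prod>j<m. [:c j, y j, 1:]) = 2 * m"
  by (subst degree_prod_sum_eq) auto

lemma reflect_poly_monic_quadratic:
  fixes c y :: "'a::comm_semiring_1"
  shows "c \<noteq> 0 \<Longrightarrow> reflect_poly [:c, y, 1:] = [:1, y, c:]"
  by (simp add: reflect_poly_def cCons_def)

lemma coeff_prod_monic_quadratics_reflect:
  fixes y c :: "nat \<Rightarrow> 'a::idom"
  assumes "\<forall>j<m. c j \<noteq> 0" "k \<le> 2 * m"
  shows "coeff (\<Prod>j<m. [:c j, y j, 1:]) (2 * m - k) = coeff (\<Prod>j<m. [:1, y j, c j:]) k"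
proof -
  have "reflect_poly (\<Prod>j<m. [:c j, y j, 1:]) = (\<Prod>j<m. [:1, y j, c j:])"
    unfolding reflect_poly_prod using assms(1) by (simp add: reflect_poly_monic_quadratic)
  then show ?thesis
    using coeff_reflect_poly[of "\<Prod>j<m. [:c j, y j, 1:]" k] assms(2)
    by (simp add: degree_prod_monic_quadratics)
qed

definition sigma_sign :: "real \<Rightarrow> nat \<Rightarrow> real" where
  "sigma_sign e k = (if k mod 4 = 0 \<or> k mod 4 = 1 then 1 else -1) * e ^ k"

lemma sigma_sign_0 [simp]: "sigma_sign e 0 = 1"
  by (simp add: sigma_sign_def)

lemma sigma_sign_Suc:
  "sigma_sign e (Suc k) = (if even k then e else - e) * sigma_sign e k"
proof -
  consider "k mod 4 = 0" | "k mod 4 = 1" | "k mod 4 = 2" | "k mod 4 = 3"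
    using mod_exhaust_less_4 by metis
  then show ?thesis
  proof cases
    case 1
    then have "Suc k mod 4 = 1" "even k" by presburger+
    with 1 show ?thesis by (simp add: sigma_sign_def)
  next
    case 2
    then have "Suc k mod 4 = 2" "odd k" by presburger+
    with 2 show ?thesis by (simp add: sigma_sign_def)
  next
    case 3
    then have "Suc k mod 4 = 3" "even k" by presburger+
    with 3 show ?thesis by (simp add: sigma_sign_def)
  next
    case 4
    then have "Suc k mod 4 = 0" "odd k" by presburger+
    with 4 show ?thesis by (simp add: sigma_sign_def)
  qed
qed

lemma sigma_sign_Suc_Suc:
  assumes "\<bar>e\<bar> = 1"
  shows "sigma_sign e (Suc (Suc k)) = - sigma_sign e k"
proof -
  have "e * e = 1" using assms by (metis abs_mult_self_eq mult_1)
  then show ?thesis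
    using sigma_sign_Suc[of e "Suc k"] sigma_sign_Suc[of e k] by auto
qed

lemma abs_sigma_sign: "\<bar>e\<bar> = 1 \<Longrightarrow> \<bar>sigma_sign e k\<bar> = 1"
  by (simp add: sigma_sign_def abs_mult power_abs)

definition sign_regular :: "real \<Rightarrow> real \<Rightarrow> real poly \<Rightarrow> bool" where
  "sign_regular e M G \<longleftrightarrow> even (degree G) \<and>
     (\<forall>k. 0 \<le> sigma_sign e k * coeff G k) \<and>
     (\<forall>k\<le>degree G. even k \<longrightarrow> coeff G k \<noteq> 0) \<and>
     (\<forall>j. even j \<longrightarrow> sigma_sign e (Suc j) * coeff G (Suc j) \<le> M * (sigma_sign e j * coeff G j))"

lemma sign_regular_1: "sign_regular e 0 1"
  by (simp add: sign_regular_def coeff_1)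

lemma sign_regular_nonzero: "sign_regular e M G \<Longrightarrow> G \<noteq> 0"
  by (auto simp: sign_regular_def)

lemma sign_regular_zero_odd_coeffs:
  "sign_regular e M G \<Longrightarrow> \<forall>k. odd k \<longrightarrow> coeff G k = 0 \<Longrightarrow> sign_regular e 0 G"
  by (simp add: sign_regular_def)

lemma sign_regular_sigma_coeff:
  assumes e: "\<bar>e\<bar> = 1" and G: "sign_regular e M G"
  shows "0 \<le> sigma_sign e k * coeff G k"
    and "coeff G k \<noteq> 0 \<Longrightarrow> 0 < sigma_sign e k * coeff G k"
    and "even k \<Longrightarrow> k \<le> degree G \<Longrightarrow> 0 < sigma_sign e k * coeff G k"
    and "even k \<Longrightarrow> M \<le> a \<Longrightarrow>
           sigma_sign e (Suc k) * coeff G (Suc k) \<le> a * (sigma_sign e k * coeff G k)"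
proof -
  show nonneg: "0 \<le> sigma_sign e k * coeff G k"
    using G by (simp add: sign_regular_def)
  have "sigma_sign e k \<noteq> 0" using abs_sigma_sign[OF e, of k] by auto
  then show pos: "coeff G k \<noteq> 0 \<Longrightarrow> 0 < sigma_sign e k * coeff G k"
    using nonneg by (simp add: order_less_le)
  show "even k \<Longrightarrow> k \<le> degree G \<Longrightarrow> 0 < sigma_sign e k * coeff G k"
    using G pos by (simp add: sign_regular_def)
  assume "even k" "M \<le> a"
  then have "sigma_sign e (Suc k) * coeff G (Suc k) \<le> M * (sigma_sign e k * coeff G k)"
    using G by (simp add: sign_regular_def)
  also have "\<dots> \<le> a * (sigma_sign e k * coeff G k)"
    using \<open>M \<le> a\<close> nonneg by (simp add: mult_right_mono)
  finally show "sigma_sign e (Suc k) * coeff G (Suc k) \<le> a * (sigma_sign e k * coeff G k)" .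
qed

lemma sgn_coeff_sign_regular:
  assumes "\<bar>e\<bar> = 1" "sign_regular e M G" "coeff G k \<noteq> 0"
  shows "sgn (coeff G k) = sigma_sign e k"
proof -
  have "sigma_sign e k = 1 \<or> sigma_sign e k = -1"
    using abs_sigma_sign[OF assms(1), of k] by linarith
  then show ?thesis
    using sign_regular_sigma_coeff(2)[OF assms] by (auto simp: sgn_if zero_less_mult_iff)
qed

lemma sigma_sign_coeff_mult_quadratic:
  fixes G :: "real poly" and a b :: real
  assumes e: "\<bar>e\<bar> = 1"
  defines "u \<equiv> \<lambda>k. sigma_sign e k * coeff G k"
    and "G' \<equiv> G * [:1, e * (b - a), - (a * b):]"
  shows "sigma_sign e 0 * coeff G' 0 = u 0"
    and "sigma_sign e 1 * coeff G' 1 = u 1 + (b - a) * u 0"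
    and "sigma_sign e (Suc (Suc i)) * coeff G' (Suc (Suc i)) =
           u (Suc (Suc i)) + (if even i then a - b else b - a) * u (Suc i) + a * b * u i"
proof -
  have ee: "e * e = 1" using e by (metis abs_mult_self_eq mult_1)
  show "sigma_sign e 0 * coeff G' 0 = u 0" by (simp add: u_def G'_def)
  show "sigma_sign e 1 * coeff G' 1 = u 1 + (b - a) * u 0"
    using sigma_sign_Suc[of e 0]
    by (simp add: u_def G'_def algebra_simps) (simp add: ee flip: mult.assoc)
  have c: "coeff G' (Suc (Suc i)) =
      coeff G (Suc (Suc i)) + e * (b - a) * coeff G (Suc i) - a * b * coeff G i"
    by (simp add: G'_def algebra_simps)
  show "sigma_sign e (Suc (Suc i)) * coeff G' (Suc (Suc i)) =
      u (Suc (Suc i)) + (if even i then a - b else b - a) * u (Suc i) + a * b * u i"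
    unfolding c using sigma_sign_Suc_Suc[OF e, of i] sigma_sign_Suc[of e i]
    by (cases "even i") (simp_all add: u_def algebra_simps)
qed

lemma sign_regular_mult_quadratic_ratio:
  assumes e: "\<bar>e\<bar> = 1" and G: "sign_regular e M G" and ab: "0 < a" "a \<le> b" "M \<le> a"
    and j: "even j"
  defines "G' \<equiv> G * [:1, e * (b - a), - (a * b):]"
  shows "sigma_sign e (Suc j) * coeff G' (Suc j) \<le> b * (sigma_sign e j * coeff G' j)"
proof -
  define u where "u k = sigma_sign e k * coeff G k" for k
  define v where "v k = sigma_sign e k * coeff G' k" for k
  note rec = sigma_sign_coeff_mult_quadratic[OF e, where G=G and a=a and b=b, folded G'_def u_def v_def]
  note u_ratio = sign_regular_sigma_coeff(4)[OF e G _ ab(3), folded u_def]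
  have "v (Suc j) \<le> b * v j"
  proof (cases j rule: nat_cases_0_1_SS)
    case 0
    then show ?thesis using rec(1,2) u_ratio[of 0] by (simp add: algebra_simps)
  next
    case (SS i)
    then have "even i" using j by simp
    have "b * v j - v (Suc j) =
        (a * u (Suc (Suc i)) - u (Suc (Suc (Suc i)))) + b * b * (a * u i - u (Suc i))"
      unfolding SS rec(3) using \<open>even i\<close> by (simp add: algebra_simps)
    moreover have "0 \<le> b * b * (a * u i - u (Suc i))"
      using u_ratio[OF \<open>even i\<close>] by simp
    ultimately show ?thesis using u_ratio[of "Suc (Suc i)"] \<open>even i\<close> by simp
  qed (use j in simp)
  then show ?thesis by (simp add: v_def)
qed

lemma sign_regular_mult_quadratic:
  assumes e: "\<bar>e\<bar> = 1" and G: "sign_regular e M G" and ab: "0 < a" "a \<le> b" "M \<le> a"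
  defines "G' \<equiv> G * [:1, e * (b - a), - (a * b):]"
  shows "sign_regular e b G'"
proof -
  define u where "u k = sigma_sign e k * coeff G k" for k
  define v where "v k = sigma_sign e k * coeff G' k" for k
  note rec = sigma_sign_coeff_mult_quadratic[OF e, where G=G and a=a and b=b, folded G'_def u_def v_def]
  note u_nonneg = sign_regular_sigma_coeff(1)[OF e G, folded u_def]
  note u_pos = sign_regular_sigma_coeff(3)[OF e G, folded u_def]
  note u_ratio = sign_regular_sigma_coeff(4)[OF e G _ ab(3), folded u_def]
  have deg: "degree G' = degree G + 2"
    unfolding G'_def using sign_regular_nonzero[OF G] ab by (intro degree_mult_quadratic) auto
  have v_even: "u (Suc (Suc i)) + a * a * u i \<le> v (Suc (Suc i))" if "even i" for i
  proof -
    have "(b - a) * u (Suc i) \<le> (b - a) * (a * u i)"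
      using u_ratio[OF that] ab by (simp add: mult_left_mono)
    then show ?thesis using rec(3)[of i] that by (simp add: algebra_simps)
  qed
  have v_nonneg: "0 \<le> v k" for k
  proof (cases k rule: nat_cases_0_1_SS)
    case (SS i)
    show ?thesis
    proof (cases "even i")
      case True
      have "0 \<le> a * a * u i" using u_nonneg[of i] by simp
      then show ?thesis using v_even[OF True] u_nonneg[of "Suc (Suc i)"] SS by simp
    next
      case False
      then show ?thesis
        using rec(3)[of i] u_nonneg[of i] u_nonneg[of "Suc i"] u_nonneg[of "Suc (Suc i)"] SS ab
        by simp
    qed
  qed (use rec u_nonneg ab in auto)
  have v_pos: "0 < v k" if "even k" "k \<le> degree G'" for k
  proof (cases k rule: nat_cases_0_1_SS)
    case 0
    then show ?thesis using rec(1) u_pos[of 0] by simp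
  next
    case (SS i)
    then have "0 < a * a * u i" using u_pos[of i] that deg ab by simp
    then show ?thesis using v_even[of i] u_nonneg[of "Suc (Suc i)"] SS that by simp
  qed (use that in simp)
  have "coeff G' k \<noteq> 0" if "even k" "k \<le> degree G'" for k
    using v_pos[OF that] by (auto simp: v_def)
  then show ?thesis
    using G deg v_nonneg sign_regular_mult_quadratic_ratio[OF e G ab]
    by (simp add: sign_regular_def v_def G'_def)
qed

lemma sign_regular_mult_quadratic_coeff_nonzero:
  assumes e: "\<bar>e\<bar> = 1" and G: "sign_regular e M G" and ab: "0 < a" "a \<le> b" "M \<le> a"
    and strict: "a < b \<or> (0 < degree G \<and> (\<forall>k\<le>degree G. coeff G k \<noteq> 0))"
  defines "G' \<equiv> G * [:1, e * (b - a), - (a * b):]"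
  shows "\<forall>k\<le>degree G'. coeff G' k \<noteq> 0"
proof (intro allI impI)
  fix k assume k: "k \<le> degree G'"
  define u where "u k = sigma_sign e k * coeff G k" for k
  note rec = sigma_sign_coeff_mult_quadratic[OF e, where G=G and a=a and b=b, folded G'_def u_def]
  note u_nonneg = sign_regular_sigma_coeff(1)[OF e G, folded u_def]
  note u_pos = sign_regular_sigma_coeff(2)[OF e G, folded u_def]
  have deg: "degree G' = degree G + 2"
    unfolding G'_def using sign_regular_nonzero[OF G] ab by (intro degree_mult_quadratic) auto
  have coeff_G: "coeff G k \<noteq> 0" if "k \<le> degree G" "even k \<or> \<not> a < b" for k
    using G strict that by (auto simp: sign_regular_def)
  have "0 < sigma_sign e k * coeff G' k" if "odd k"
  proof (cases k rule: nat_cases_0_1_SS)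
    case 1
    have "0 < u 1 + (b - a) * u 0"
    proof (cases "a < b")
      case True
      then show ?thesis using u_pos[OF coeff_G[of 0]] u_nonneg[of 1] by (simp add: add_nonneg_pos)
    next
      case False
      then show ?thesis using u_pos[OF coeff_G[of 1]] u_nonneg[of 0] strict ab
        by (simp add: add_pos_nonneg)
    qed
    then show ?thesis using rec(2) 1 by simp
  next
    case (SS i)
    then have i: "odd i" "i \<le> degree G" using that k deg by auto
    then have "i \<noteq> degree G" using G by (auto simp: sign_regular_def)
    have "0 < (b - a) * u (Suc i) + a * b * u i"
    proof (cases "a < b")
      case True
      then show ?thesis
        using u_pos[OF coeff_G[of "Suc i"]] u_nonneg[of i] i \<open>i \<noteq> degree G\<close> ab
        by (simp add: add_pos_nonneg)
    next
      case False
      then show ?thesis using u_pos[OF coeff_G[of i]] u_nonneg[of "Suc i"] i ab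
        by (simp add: add_nonneg_pos)
    qed
    then show ?thesis using rec(3)[of i] i u_nonneg[of "Suc (Suc i)"] SS by simp
  qed (use that in simp)
  then show "coeff G' k \<noteq> 0"
    using sign_regular_mult_quadratic[OF e G ab, folded G'_def] k
    by (cases "even k") (auto simp: sign_regular_def)
qed

lemma sign_regular_prod_quadratics:
  fixes a b :: "nat \<Rightarrow> real"
  assumes e: "\<bar>e\<bar> = 1"
    and ab: "\<forall>j<m. 0 < a j \<and> a j \<le> b j" and chain: "\<forall>j. Suc j < m \<longrightarrow> b j \<le> a (Suc j)"
  shows "sign_regular e (if m = 0 then 0 else b (m - 1))
           (\<Prod>j<m. [:1, e * (b j - a j), - (a j * b j):])"
  using ab chain
proof (induction m)
  case 0
  then show ?case by (simp add: sign_regular_1)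
next
  case (Suc m)
  have "(if m = 0 then 0 else b (m - 1)) \<le> a m"
    using Suc.prems by (cases m) auto
  then show ?case
    using sign_regular_mult_quadratic[OF e Suc.IH] Suc.prems by (simp add: mult.commute)
qed

lemma coeff_prod_quadratics_nonzero:
  fixes a b :: "nat \<Rightarrow> real"
  assumes e: "\<bar>e\<bar> = 1"
    and ab: "\<forall>j<m. 0 < a j \<and> a j \<le> b j" and chain: "\<forall>j. Suc j < m \<longrightarrow> b j \<le> a (Suc j)"
    and strict: "\<exists>j<m. a j < b j"
  shows "\<forall>k\<le>2 * m. coeff (\<Prod>j<m. [:1, e * (b j - a j), - (a j * b j):]) k \<noteq> 0"
  using ab chain strict
proof (induction m)
  case 0
  then show ?case by simp
next
  case (Suc m)
  let ?G = "\<Prod>j<m. [:1, e * (b j - a j), - (a j * b j):]"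
  have "a j \<noteq> 0 \<and> b j \<noteq> 0" if "j < Suc m" for j
  proof -
    have "0 < a j" "a j \<le> b j" using Suc.prems(1) that by simp_all
    then show ?thesis by simp
  qed
  then have deg: "degree ?G = 2 * m"
    and deg_Suc: "degree (\<Prod>j<Suc m. [:1, e * (b j - a j), - (a j * b j):]) = 2 * Suc m"
    by (intro degree_prod_quadratics; simp)+
  have "(if m = 0 then 0 else b (m - 1)) \<le> a m"
    using Suc.prems by (cases m) auto
  moreover have "a m < b m \<or> (0 < degree ?G \<and> (\<forall>k\<le>degree ?G. coeff ?G k \<noteq> 0))"
    using Suc deg less_Suc_eq by fastforce
  ultimately show ?case
    using sign_regular_mult_quadratic_coeff_nonzero[OF e sign_regular_prod_quadratics[OF e]]
      Suc.prems deg_Suc by (simp add: mult.commute)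
qed

lemma sign_regular_prod_even_quadratics:
  fixes a :: "nat \<Rightarrow> real"
  assumes "\<forall>j<m. a j \<noteq> 0"
  shows "sign_regular 1 0 (\<Prod>j<m. [:1, 0, - (a j ^ 2):])"
  using assms
proof (induction m)
  case 0
  then show ?case by (simp add: sign_regular_1)
next
  case (Suc m)
  have "sign_regular 1 \<bar>a m\<bar> ((\<Prod>j<m. [:1, 0, - (a j ^ 2):]) * [:1, 0, - (a m ^ 2):])"
    using sign_regular_mult_quadratic[of 1 0 _ "\<bar>a m\<bar>" "\<bar>a m\<bar>"] Suc
    by (simp add: power2_eq_square)
  moreover have "\<forall>k. odd k \<longrightarrow> coeff (\<Prod>j<Suc m. [:1, 0, - (a j ^ 2):]) k = 0"
    using coeff_prod_even_quadratics_odd[where f="\<lambda>_. 1" and g="\<lambda>j. - (a j ^ 2)"] by blast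
  ultimately show ?case
    using sign_regular_zero_odd_coeffs unfolding prod.lessThan_Suc by blast
qed

lemma prod_linear_factors_alternating:
  fixes zs :: "real list" and e :: real
  assumes e: "\<bar>e\<bar> = 1" and len: "length zs = 2 * n" and sorted: "sorted (map abs zs)"
    and signs: "\<forall>j<n. 0 < e * zs ! (2 * j) \<and> e * zs ! (2 * j + 1) < 0"
  obtains a b :: "nat \<Rightarrow> real"
  where "(\<Prod>z\<leftarrow>zs. [:- z, 1:]) = (\<Prod>j<n. [:- (a j * b j), e * (b j - a j), 1:])"
    and "\<forall>j<n. 0 < a j \<and> a j \<le> b j"
    and "\<forall>j. Suc j < n \<longrightarrow> b j \<le> a (Suc j)"
proof -
  define a where "a j = \<bar>zs ! (2 * j)\<bar>" for j
  define b where "b j = \<bar>zs ! (2 * j + 1)\<bar>" for j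
  have ee: "e * e = 1" using e by (metis abs_mult_self_eq mult_1)
  have z0: "zs ! (2 * j) = e * a j" and z1: "zs ! (2 * j + 1) = - (e * b j)" if "j < n" for j
    using eq_sgn_mult_abs[OF e, of "zs ! (2 * j)"] eq_sgn_mult_abs[OF e, of "- zs ! (2 * j + 1)"]
      signs that by (auto simp: a_def b_def)
  have "(\<Prod>z\<leftarrow>zs. [:- z, 1:]) = (\<Prod>i<2 * n. [:- zs ! i, 1:])"
    by (simp add: prod_list_map_conv_lessThan len)
  also have "\<dots> = (\<Prod>j<n. [:- zs ! (2 * j), 1:] * [:- zs ! (2 * j + 1), 1:])"
    by (rule prod_lessThan_double)
  also have "\<dots> = (\<Prod>j<n. [:- (a j * b j), e * (b j - a j), 1:])"
  proof (rule prod.cong)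
    fix j assume "j \<in> {..<n}"
    then show "[:- zs ! (2 * j), 1:] * [:- zs ! (2 * j + 1), 1:] = [:- (a j * b j), e * (b j - a j), 1:]"
      using z0 z1 ee by (simp add: algebra_simps)
  qed simp
  finally have "(\<Prod>z\<leftarrow>zs. [:- z, 1:]) = (\<Prod>j<n. [:- (a j * b j), e * (b j - a j), 1:])" .
  moreover have "\<forall>j<n. 0 < a j \<and> a j \<le> b j"
    using signs sorted_nth_mono[OF sorted, of "2 * j" "2 * j + 1" for j] len
    by (auto simp: a_def b_def)
  moreover have "\<forall>j. Suc j < n \<longrightarrow> b j \<le> a (Suc j)"
    using sorted_nth_mono[OF sorted, of "2 * j + 1" "2 * Suc j" for j] len
    by (auto simp: a_def b_def)
  ultimately show ?thesis by (rule that)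
qed

lemma defines_moae_alternating_factorization:
  fixes Q :: "real poly" and e :: real
  assumes "defines_moae Q (r_PN0 (2 * n)) \<and> e = 1 \<or> defines_moae Q (r_NP0 (2 * n)) \<and> e = -1"
  obtains a b :: "nat \<Rightarrow> real"
  where "\<forall>j<n. 0 < a j \<and> a j \<le> b j" and "\<forall>j. Suc j < n \<longrightarrow> b j \<le> a (Suc j)"
    and "Q = smult (lead_coeff Q) (\<Prod>j<n. [:- (a j * b j), e * (b j - a j), 1:])"
proof -
  from assms obtain w zs where w: "w = r_PN0 (2 * n) \<and> e = 1 \<or> w = r_NP0 (2 * n) \<and> e = -1"
    and roots: "root_list Q zs" and sorted: "sorted (map abs zs)"
    and letters: "\<forall>i<2 * n. (w ! i \<longrightarrow> zs ! i > 0) \<and> (\<not> w ! i \<longrightarrow> zs ! i < 0)"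
    and deg: "degree Q = 2 * n"
    unfolding defines_moae_def r_PN0_def r_NP0_def by auto
  have "0 < e * zs ! (2 * j) \<and> e * zs ! (2 * j + 1) < 0" if "j < n" for j
    using w letters[rule_format, of "2 * j"] letters[rule_format, of "2 * j + 1"] that
    by (auto simp: r_PN0_def r_NP0_def)
  moreover have "length zs = 2 * n"
    using roots deg unfolding root_list_def by simp
  moreover have "\<bar>e\<bar> = 1"
    using w by auto
  ultimately obtain a b where "(\<Prod>z\<leftarrow>zs. [:- z, 1:]) = (\<Prod>j<n. [:- (a j * b j), e * (b j - a j), 1:])"
      "\<forall>j<n. 0 < a j \<and> a j \<le> b j" "\<forall>j. Suc j < n \<longrightarrow> b j \<le> a (Suc j)"
    using prod_linear_factors_alternating[OF _ _ sorted] by blast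
  moreover have "Q = smult (lead_coeff Q) (\<Prod>z\<leftarrow>zs. [:- z, 1:])"
    using roots unfolding root_list_def by blast
  ultimately show ?thesis using that by simp
qed

definition even_quadratic_product :: "real poly \<Rightarrow> nat \<Rightarrow> bool" where
  "even_quadratic_product Q n \<longleftrightarrow> (\<exists>A as. A > 0 \<and> length as = n \<and> (\<forall>a\<in>set as. a \<noteq> 0) \<and>
     Q = smult A (\<Prod>a\<leftarrow>as. [:- (a ^ 2), 0, 1:]))"

lemma even_quadratic_product_coeff_odd:
  assumes "even_quadratic_product Q n" "odd k"
  shows "coeff Q k = 0"
proof -
  obtain A as where "Q = smult A (\<Prod>j<length as. [:- (as ! j ^ 2), 0, 1:])"
    using assms(1) unfolding even_quadratic_product_def prod_list_map_conv_lessThan by blast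
  then show ?thesis using assms(2) by (simp add: coeff_prod_even_quadratics_odd)
qed

lemma alternating_moae_even_or_nonzero:
  fixes Q :: "real poly" and e :: real
  assumes moae: "defines_moae Q (r_PN0 (2 * n)) \<and> e = 1 \<or> defines_moae Q (r_NP0 (2 * n)) \<and> e = -1"
    and lead: "0 < lead_coeff Q"
  shows "even_quadratic_product Q n \<or> (\<forall>k\<le>2 * n. coeff Q k \<noteq> 0)"
proof -
  define L where "L = lead_coeff Q"
  obtain a b where ab: "\<forall>j<n. 0 < a j \<and> a j \<le> b j" "\<forall>j. Suc j < n \<longrightarrow> b j \<le> a (Suc j)"
    and Q: "Q = smult L (\<Prod>j<n. [:- (a j * b j), e * (b j - a j), 1:])"
    using defines_moae_alternating_factorization[OF moae] unfolding L_def by blast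
  have L: "0 < L" using lead by (simp add: L_def)
  show ?thesis
  proof (cases "\<exists>j<n. a j < b j")
    case True
    have "\<bar>e\<bar> = 1" using moae by auto
    from coeff_prod_quadratics_nonzero[OF this ab True]
    have rev_nz: "coeff Q (2 * n - k) \<noteq> 0" if "k \<le> 2 * n" for k
      using coeff_prod_monic_quadratics_reflect[where m=n and c="\<lambda>j. - (a j * b j)" and k=k] ab(1) L that
      unfolding Q coeff_smult by fastforce
    have "coeff Q k \<noteq> 0" if "k \<le> 2 * n" for k
      using rev_nz[of "2 * n - k"] that by simp
    then show ?thesis by blast
  next
    case False
    then have "[:- (a j * b j), e * (b j - a j), 1:] = [:- (a j ^ 2), 0, 1:]" if "j < n" for j
      using ab(1) that by (force simp: power2_eq_square)
    then have "Q = smult L (\<Prod>j<n. [:- (a j ^ 2), 0, 1:])"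
      unfolding Q by (intro arg_cong[where f="smult L"] prod.cong) auto
    also have "\<dots> = smult L (\<Prod>x\<leftarrow>map a [0..<n]. [:- (x ^ 2), 0, 1:])"
      by (simp add: prod_list_map_conv_lessThan)
    finally have "Q = smult L (\<Prod>x\<leftarrow>map a [0..<n]. [:- (x ^ 2), 0, 1:])" .
    moreover have "\<forall>x\<in>set (map a [0..<n]). x \<noteq> 0"
      using ab(1) by force
    ultimately show ?thesis
      unfolding even_quadratic_product_def using L by (intro disjI1 exI[of _ L] exI[of _ "map a [0..<n]"]) simp
  qed
qed

lemma alternating_moae_sign_pattern:
  fixes Q :: "real poly" and e :: real
  assumes moae: "defines_moae Q (r_PN0 (2 * n)) \<and> e = 1 \<or> defines_moae Q (r_NP0 (2 * n)) \<and> e = -1"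
    and lead: "0 < lead_coeff Q" and nz: "\<forall>k\<le>2 * n. coeff Q k \<noteq> 0"
  shows "defines_sign_pattern Q (map (sigma_sign e) [0..<Suc (2 * n)])"
proof -
  define L where "L = lead_coeff Q"
  obtain a b where ab: "\<forall>j<n. 0 < a j \<and> a j \<le> b j" "\<forall>j. Suc j < n \<longrightarrow> b j \<le> a (Suc j)"
    and Q: "Q = smult L (\<Prod>j<n. [:- (a j * b j), e * (b j - a j), 1:])"
    using defines_moae_alternating_factorization[OF moae] unfolding L_def by blast
  define G where "G = (\<Prod>j<n. [:1, e * (b j - a j), - (a j * b j):])"
  have L: "0 < L" using lead by (simp add: L_def)
  have e: "\<bar>e\<bar> = 1" using moae by auto
  have deg: "degree Q = 2 * n"
    using L unfolding Q by (simp add: degree_prod_monic_quadratics)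
  have coeff_Q: "coeff Q (2 * n - k) = L * coeff G k" if "k \<le> 2 * n" for k
    using coeff_prod_monic_quadratics_reflect[where m=n and c="\<lambda>j. - (a j * b j)" and k=k] ab(1) that
    unfolding Q G_def coeff_smult by force
  have "sgn (coeff Q (2 * n - k)) = sigma_sign e k" if k: "k \<le> 2 * n" for k
  proof -
    have "coeff G k \<noteq> 0" using nz coeff_Q[OF k] by force
    then have "sgn (coeff G k) = sigma_sign e k"
      using sgn_coeff_sign_regular[OF e sign_regular_prod_quadratics[OF e ab]]
      by (simp add: G_def)
    then show ?thesis using coeff_Q[OF k] L by (simp add: sgn_mult)
  qed
  then show ?thesis
    using deg nz
    by (auto simp: defines_sign_pattern_def less_Suc_eq_le simp del: upt_Suc intro!: map_cong)
qed

lemma even_quadratic_product_coeff_signs: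
  assumes Q: "even_quadratic_product Q n" and k: "k \<le> 2 * n"
  shows "sgn (coeff Q (2 * n - k)) = (if odd k then 0 else if k mod 4 = 0 then 1 else -1)"
proof (cases "odd k")
  case True
  then show ?thesis using even_quadratic_product_coeff_odd[OF Q, of "2 * n - k"] k by simp
next
  case False
  obtain A as where A: "0 < A" and len: "length as = n" and nz: "\<forall>x\<in>set as. x \<noteq> 0"
    and Q_list: "Q = smult A (\<Prod>x\<leftarrow>as. [:- (x ^ 2), 0, 1:])"
    using Q unfolding even_quadratic_product_def by blast
  define a where "a j = as ! j" for j
  define G where "G = (\<Prod>j<n. [:1, 0, - (a j ^ 2):])"
  have a_nz: "\<forall>j<n. a j \<noteq> 0" using nz len by (simp add: a_def)
  have coeff_Q: "coeff Q (2 * n - k) = A * coeff G k"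
    using coeff_prod_monic_quadratics_reflect[where m=n and c="\<lambda>j. - (a j ^ 2)" and k=k] a_nz k
    unfolding Q_list prod_list_map_conv_lessThan len G_def coeff_smult a_def by force
  have G: "sign_regular 1 0 G" and deg_G: "degree G = 2 * n"
    using sign_regular_prod_even_quadratics[OF a_nz] degree_prod_quadratics[of n "\<lambda>j. - (a j ^ 2)"] a_nz
    by (simp_all add: G_def)
  then have "coeff G k \<noteq> 0" using False k by (simp add: sign_regular_def)
  then have "sgn (coeff G k) = sigma_sign 1 k" using sgn_coeff_sign_regular[of 1 0 G k] G by simp
  moreover have "k mod 4 = 0 \<or> k mod 4 = 2" using False by presburger
  ultimately show ?thesis using coeff_Q A False by (auto simp: sgn_mult sigma_sign_def)
qed

lemma prod_list_pairable:
  fixes f :: "real \<Rightarrow> 'a::comm_monoid_mult"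
  assumes "mset zs = mset as + mset (map uminus as)"
  shows "(\<Prod>z\<leftarrow>zs. f z) = (\<Prod>a\<leftarrow>as. f a * f (- a))"
proof -
  have "(\<Prod>z\<leftarrow>zs. f z) = prod_mset (image_mset f (mset zs))"
    by (metis mset_map prod_mset_prod_list)
  also have "\<dots> = (\<Prod>a\<leftarrow>as. f a) * (\<Prod>a\<leftarrow>map uminus as. f a)"
    using assms by (metis image_mset_union mset_map prod_mset.union prod_mset_prod_list)
  also have "\<dots> = (\<Prod>a\<leftarrow>as. f a * f (- a))"
    by (induction as) (simp_all add: mult_ac)
  finally show ?thesis .
qed

lemma pairable_roots_even_quadratic_product:
  assumes roots: "root_list Q zs" and pair: "pairable (mset zs)"
    and L: "0 < lead_coeff Q" and c0: "coeff Q 0 \<noteq> 0"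
  shows "even_quadratic_product Q (degree Q div 2)"
proof -
  obtain as where as: "mset zs = mset as + mset (map uminus as)"
    using pair unfolding pairable_def by blast
  then have "length zs = 2 * length as"
    by (metis mset_map size_image_mset size_mset size_union mult_2)
  moreover have "length zs = degree Q"
    using roots unfolding root_list_def by blast
  ultimately have len: "length as = degree Q div 2"
    by simp
  have "Q = smult (lead_coeff Q) (\<Prod>z\<leftarrow>zs. [:- z, 1:])"
    using roots unfolding root_list_def by blast
  also have "(\<Prod>z\<leftarrow>zs. [:- z, 1:]) = (\<Prod>a\<leftarrow>as. [:- (a ^ 2), 0, 1:])"
    using prod_list_pairable[OF as, of "\<lambda>z. [:- z, 1:]"] by (simp add: power2_eq_square)
  finally have Q: "Q = smult (lead_coeff Q) (\<Prod>a\<leftarrow>as. [:- (a ^ 2), 0, 1:])" .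
  have "coeff Q 0 = lead_coeff Q * (\<Prod>a\<leftarrow>as. - (a ^ 2))"
    by (subst Q) (simp add: coeff_0_prod_list o_def)
  then have "\<forall>a\<in>set as. a \<noteq> 0"
    using c0 by (auto simp: prod_list_zero_iff)
  then show ?thesis
    unfolding even_quadratic_product_def using L Q len by blast
qed

lemma Sigma_plus_eq: "Sigma_plus d = map (sigma_sign 1) [0..<Suc d]"
  by (simp add: Sigma_plus_def sigma_sign_def)

lemma Sigma_minus_eq: "Sigma_minus d = map (sigma_sign (-1)) [0..<Suc d]"
proof -
  have "(if k mod 4 = 0 \<or> k mod 4 = 3 then 1 else -1) = sigma_sign (-1) k" for k :: nat
  proof -
    have "even k \<longleftrightarrow> k mod 4 = 0 \<or> k mod 4 = 2" by presburger
    then show ?thesis using mod_exhaust_less_4[of k] by (auto simp: sigma_sign_def)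
  qed
  then show ?thesis by (simp add: Sigma_minus_def)
qed

theorem theorem1p10:
  fixes Q :: "real poly" and d :: nat
  assumes "d \<ge> 2" and "even d"
    and "hyperbolic Q" and "degree Q = d" and "lead_coeff Q > 0" and "coeff Q 0 \<noteq> 0"
    and "defines_moae Q (r_PN0 d) \<or> defines_moae Q (r_NP0 d)"
  shows "((\<exists>A as. A > 0 \<and> length as = d div 2 \<and> (\<forall>a\<in>set as. a \<noteq> 0) \<and>
              Q = smult A (\<Prod>a\<leftarrow>as. [:-(a^2), 0, 1:]))
          \<noteq> ((\<forall>k\<le>d. coeff Q k \<noteq> 0) \<and>
              (\<forall>zs. root_list Q zs \<longrightarrow> \<not> pairable (mset zs))))
       \<and> ((\<exists>A as. A > 0 \<and> length as = d div 2 \<and> (\<forall>a\<in>set as. a \<noteq> 0) \<and>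
              Q = smult A (\<Prod>a\<leftarrow>as. [:-(a^2), 0, 1:]))
          \<longrightarrow> (\<forall>k\<le>d. sgn (coeff Q (d - k)) =
                 (if odd k then 0 else if k mod 4 = 0 then 1 else -1)))
       \<and> (((\<forall>k\<le>d. coeff Q k \<noteq> 0) \<and>
              (\<forall>zs. root_list Q zs \<longrightarrow> \<not> pairable (mset zs)))
          \<longrightarrow> (defines_moae Q (r_PN0 d) \<longrightarrow> defines_sign_pattern Q (Sigma_plus d))
            \<and> (defines_moae Q (r_NP0 d) \<longrightarrow> defines_sign_pattern Q (Sigma_minus d)))"
proof -
  obtain n where d: "d = 2 * n" using \<open>even d\<close> by blast
  have I_eq: "(\<exists>A as. A > 0 \<and> length as = d div 2 \<and> (\<forall>a\<in>set as. a \<noteq> 0) \<and>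
      Q = smult A (\<Prod>a\<leftarrow>as. [:-(a^2), 0, 1:])) \<longleftrightarrow> even_quadratic_product Q n"
    by (simp add: even_quadratic_product_def d)
  have "even_quadratic_product Q n \<or> (\<forall>k\<le>d. coeff Q k \<noteq> 0)"
    using assms(5,7) alternating_moae_even_or_nonzero[of Q n 1]
      alternating_moae_even_or_nonzero[of Q n "-1"] d by auto
  moreover have "\<forall>k\<le>d. sgn (coeff Q (d - k)) = (if odd k then 0 else if k mod 4 = 0 then 1 else -1)"
    if "even_quadratic_product Q n"
    using even_quadratic_product_coeff_signs[OF that] d by simp
  moreover have "\<not> (\<forall>k\<le>d. coeff Q k \<noteq> 0)" if "even_quadratic_product Q n"
    using even_quadratic_product_coeff_odd[OF that, of 1] \<open>d \<ge> 2\<close> by (auto intro!: exI[of _ 1])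
  moreover have "\<not> pairable (mset zs)" if "root_list Q zs" "\<not> even_quadratic_product Q n" for zs
    using pairable_roots_even_quadratic_product[OF that(1)] assms(4-6) that(2) d by auto
  moreover have "defines_sign_pattern Q (Sigma_plus d)"
    if "\<forall>k\<le>d. coeff Q k \<noteq> 0" "defines_moae Q (r_PN0 d)"
    using alternating_moae_sign_pattern[of Q n 1] assms(5) that unfolding Sigma_plus_eq d by simp
  moreover have "defines_sign_pattern Q (Sigma_minus d)"
    if "\<forall>k\<le>d. coeff Q k \<noteq> 0" "defines_moae Q (r_NP0 d)"
    using alternating_moae_sign_pattern[of Q n "-1"] assms(5) that unfolding Sigma_minus_eq d by simp
  ultimately show ?thesis
    unfolding I_eq by blast
qed

end
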